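(* Let $\tau$ be a Euclidean triangle with edge lengths $\ell_1,\ell_2,\ell_3$ and interior angles $\alpha_1,\alpha_2,\alpha_3$ (the angle $\alpha_i$ opposite the edge of length $\ell_i$). The following are equivalent: (i) $\tau$ is generic, i.e. for some real $k>0$ the numbers $k\ell_1,k\ell_2,k\ell_3$ are algebraically independent over $\mathbb{Q}$; (s) for some (hence almost every) $k\in\mathbb{R}$ the numbers $k\sin\alpha_1,k\sin\alpha_2,k\sin\alpha_3$ are algebraically independent over $\mathbb{Q}$; (c) for some (hence almost every) $k\in\mathbb{R}$ the numbers $k\cos\alpha_1,k\cos\alpha_2,k\cos\alpha_3$ are algebraically independent over $\mathbb{Q}$.
   Context: Real numbers $a_1,a_2,a_3$ are algebraically independent over $\mathbb{Q}$ if there is no nonzero polynomial $p\in\mathbb{Z}[x_1,x_2,x_3]$ with $p(a_1,a_2,a_3)=0$. *)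

theory Defs
  imports "HOL-Analysis.Analysis"
begin

text \<open>A polynomial in Z[x1,x2,x3] is represented by its
  finitely supported coefficient function on exponent triples.\<close>
definition alg_indep3 :: "real \<Rightarrow> real \<Rightarrow> real \<Rightarrow> bool" where
  "alg_indep3 a1 a2 a3 \<longleftrightarrow>
     (\<forall>p :: nat \<times> nat \<times> nat \<Rightarrow> int.
        finite {m. p m \<noteq> 0} \<longrightarrow>
        (\<Sum>(i,j,k)\<in>{m. p m \<noteq> 0}. of_int (p (i,j,k)) * a1 ^ i * a2 ^ j * a3 ^ k) = 0 \<longrightarrow>
        (\<forall>m. p m = 0))"

definition vertex_angle :: "real^2 \<Rightarrow> real^2 \<Rightarrow> real^2 \<Rightarrow> real" where
  "vertex_angle A B C = arccos (((A - B) \<bullet> (C - B)) / (norm (A - B) * norm (C - B)))"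

end

theory Submission
  imports Defs "HOL-Computational_Algebra.Polynomial"
begin

text \<open>By the laws of sines and cosines, the sines \<open>s\<^sub>i\<close> of the angles are proportional to the side
  lengths, the cosines are \<open>c\<^sub>1 = (s\<^sub>2\<^sup>2 + s\<^sub>3\<^sup>2 - s\<^sub>1\<^sup>2) / (2 s\<^sub>2 s\<^sub>3)\<close> etc., and conversely
  \<open>s\<^sub>i\<^sup>2 = 1 - c\<^sub>i\<^sup>2\<close> with \<open>c\<^sub>1\<^sup>2 + c\<^sub>2\<^sup>2 + c\<^sub>3\<^sup>2 + 2 c\<^sub>1 c\<^sub>2 c\<^sub>3 = 1\<close>. After a suitable rescaling each
  triple is therefore integral over the ring generated by the other: the scaled cosines are cubic
  forms in the scaled sines, and the scaled sines are square roots of \<open>t\<^sup>2 - y\<^sub>i\<^sup>2\<close>, where \<open>y\<^sub>i = t c\<^sub>i\<close>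
  and \<open>t\<close> is a root of a cubic over \<open>\<bbbQ>[y\<^sub>1,y\<^sub>2,y\<^sub>3]\<close>. Algebraic dependence passes to such
  integral elements, which is shown by counting dimensions of spaces of bounded degree. Finally,
  if \<open>k a\<^sub>1, k a\<^sub>2, k a\<^sub>3\<close> are independent for one \<open>k\<close>, then the \<open>k\<close> for which they are dependent are
  roots of countably many nonzero polynomials, a null set.\<close>

section \<open>Monomials and rational relations\<close>

definition monomial3 :: "real \<Rightarrow> real \<Rightarrow> real \<Rightarrow> nat \<times> nat \<times> nat \<Rightarrow> real" where
  "monomial3 a b c m = a ^ fst m * b ^ fst (snd m) * c ^ snd (snd m)"

definition degree3 :: "nat \<times> nat \<times> nat \<Rightarrow> nat" where
  "degree3 m = fst m + fst (snd m) + snd (snd m)"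

lemma monomial3_add: "monomial3 a b c (g + h) = monomial3 a b c g * monomial3 a b c h"
  by (simp add: monomial3_def power_add)

lemma monomial3_zero [simp]: "monomial3 a b c 0 = 1"
  by (simp add: monomial3_def zero_prod_def)

lemma degree3_add: "degree3 (g + h) = degree3 g + degree3 h"
  by (simp add: degree3_def)

lemma degree3_zero [simp]: "degree3 0 = 0"
  by (simp add: degree3_def zero_prod_def)

lemma monomial3_scale: "monomial3 (k * a) (k * b) (k * c) m = k ^ degree3 m * monomial3 a b c m"
  by (simp add: monomial3_def degree3_def power_mult_distrib power_add)

lemma alg_indep3_iff:
  "alg_indep3 a b c \<longleftrightarrow> (\<forall>p. finite {m. p m \<noteq> 0} \<longrightarrow>
     (\<Sum>m | p m \<noteq> 0. of_int (p m) * monomial3 a b c m) = 0 \<longrightarrow> (\<forall>m. p m = 0))"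
proof -
  have "(\<Sum>(i,j,k)\<in>{m. p m \<noteq> 0}. of_int (p (i,j,k)) * a ^ i * b ^ j * c ^ k)
      = (\<Sum>m | p m \<noteq> 0. of_int (p m) * monomial3 a b c m)" for p :: "_ \<Rightarrow> int"
    by (rule sum.cong) (auto simp: monomial3_def mult.assoc)
  then show ?thesis
    unfolding alg_indep3_def by simp
qed

lemma rat_common_denominator:
  assumes "finite S"
  shows "\<exists>d::int. d > 0 \<and> (\<forall>m\<in>S. \<exists>z. of_int d * u m = (of_int z :: rat))"
  using assms
proof (induction S rule: finite_induct)
  case empty
  show ?case by (intro exI[of _ 1]) auto
next
  case (insert m0 S)
  then obtain d where d: "d > 0" "\<forall>m\<in>S. \<exists>z. of_int d * u m = (of_int z :: rat)"
    by blast
  obtain a b where ab: "quotient_of (u m0) = (a, b)"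
    by (cases "quotient_of (u m0)")
  have b: "b > 0" and u: "u m0 = of_int a / of_int b"
    using quotient_of_denom_pos[OF ab] quotient_of_div[OF ab] by auto
  have "\<exists>z. of_int (d * b) * u m = (of_int z :: rat)" if m: "m \<in> insert m0 S" for m
  proof (cases "m = m0")
    case True
    then show ?thesis
      using b by (intro exI[of _ "d * a"]) (simp add: u)
  next
    case False
    then obtain z where "of_int d * u m = (of_int z :: rat)"
      using d(2) m by auto
    then show ?thesis
      by (intro exI[of _ "z * b"]) (simp add: algebra_simps)
  qed
  then show ?case
    using d b by (intro exI[of _ "d * b"]) auto
qed

lemma alg_indep3_rat_relation:
  assumes indep: "alg_indep3 a b c" and S: "finite S"
    and rel: "(\<Sum>m\<in>S. of_rat (u m) * monomial3 a b c m) = 0" and "m \<in> S"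
  shows "u m = 0"
proof -
  obtain d :: int where d: "d > 0" "\<forall>m\<in>S. \<exists>z. of_int d * u m = (of_int z :: rat)"
    using rat_common_denominator[OF S] by blast
  define p where "p m = (if m \<in> S then (SOME z. (of_int z :: rat) = of_int d * u m) else 0)"
    for m
  have p: "of_int (p m) = of_int d * u m" if "m \<in> S" for m
  proof -
    have "\<exists>z. (of_int z :: rat) = of_int d * u m"
      using that d(2) by metis
    then show ?thesis
      unfolding p_def using that by (simp add: someI_ex[where P = "\<lambda>z. of_int z = of_int d * u m"])
  qed
  have supp: "{m. p m \<noteq> 0} \<subseteq> S"
    by (auto simp: p_def)
  have "(\<Sum>m | p m \<noteq> 0. of_int (p m) * monomial3 a b c m)
      = (\<Sum>m\<in>S. of_int (p m) * monomial3 a b c m)"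
    by (rule sum.mono_neutral_left[OF S supp]) auto
  also have "\<dots> = (\<Sum>m\<in>S. of_int d * (of_rat (u m) * monomial3 a b c m))"
  proof (rule sum.cong)
    fix m assume "m \<in> S"
    have "(of_int (p m) :: real) = of_rat (of_int (p m))"
      by simp
    also have "\<dots> = of_int d * of_rat (u m)"
      using p[OF \<open>m \<in> S\<close>] by (simp add: of_rat_mult)
    finally show "of_int (p m) * monomial3 a b c m = of_int d * (of_rat (u m) * monomial3 a b c m)"
      by simp
  qed simp
  also have "\<dots> = 0"
    using rel by (simp add: sum_distrib_left[symmetric])
  finally have "\<forall>m. p m = 0"
    using indep finite_subset[OF supp S] unfolding alg_indep3_iff by blast
  then have "of_int d * u m = 0"
    using p[OF \<open>m \<in> S\<close>] by (metis of_int_0)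
  then show ?thesis
    using d(1) by simp
qed

interpretation Q: vector_space "\<lambda>(q::rat) (x::real). of_rat q * x"
  by unfold_locales (auto simp: algebra_simps of_rat_add of_rat_mult)

lemma alg_indep3_inj_monomial3:
  assumes "alg_indep3 a b c"
  shows "inj (monomial3 a b c)"
proof (rule injI, rule ccontr)
  fix g h assume eq: "monomial3 a b c g = monomial3 a b c h" and "g \<noteq> h"
  define u where "u m = (if m = g then 1 else -1 :: rat)" for m
  have "(\<Sum>m\<in>{g, h}. of_rat (u m) * monomial3 a b c m) = 0"
    using eq \<open>g \<noteq> h\<close> by (simp add: u_def)
  then have "u g = 0"
    using alg_indep3_rat_relation[OF assms, of "{g, h}" u g] by simp
  then show False
    by (simp add: u_def)
qed

lemma alg_indep3_independent_monomials:
  assumes indep: "alg_indep3 a b c" and B: "finite B"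
  shows "Q.independent (monomial3 a b c ` B)"
proof
  let ?f = "monomial3 a b c"
  have inj: "inj_on ?f B"
    using alg_indep3_inj_monomial3[OF indep] by (rule inj_on_subset) simp
  assume "Q.dependent (?f ` B)"
  then obtain u where u: "\<exists>v\<in>?f ` B. u v \<noteq> 0" "(\<Sum>v\<in>?f ` B. of_rat (u v) * v) = 0"
    using Q.dependent_finite[of "?f ` B"] B by auto
  have "(\<Sum>m\<in>B. of_rat ((u \<circ> ?f) m) * ?f m) = 0"
    using u(2) by (simp add: sum.reindex[OF inj])
  then have "(u \<circ> ?f) m = 0" if "m \<in> B" for m
    using alg_indep3_rat_relation[OF indep B] that by blast
  then show False
    using u(1) by auto
qed

section \<open>Algebraic dependence passes to integral elements\<close>

lemma span_mult_closed:
  assumes "\<And>s. s \<in> S \<Longrightarrow> z * s \<in> Q.span T" and "x \<in> Q.span S"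
  shows "z * x \<in> Q.span T"
  using assms(2)
proof (induction x rule: Q.span_induct_alt)
  case base
  show ?case
    by (simp add: Q.span_zero)
next
  case (step q s x)
  have "z * (of_rat q * s + x) = of_rat q * (z * s) + z * x"
    by (simp add: algebra_simps)
  then show ?case
    using assms(1)[OF step(1)] step(2) by (simp add: Q.span_add Q.span_scale)
qed

text \<open>The elements of the module \<open>\<Sum>\<^sub>e\<^sub>\<in>\<^sub>E \<bbbQ>[y\<^sub>1,y\<^sub>2,y\<^sub>3] e\<close> of degree at most \<open>N\<close> in the \<open>y\<^sub>i\<close>.\<close>
definition graded_span :: "real \<Rightarrow> real \<Rightarrow> real \<Rightarrow> real set \<Rightarrow> nat \<Rightarrow> real set" where
  "graded_span a b c E N = Q.span {monomial3 a b c g * e | g e. degree3 g \<le> N \<and> e \<in> E}"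

lemma graded_span_base:
  "degree3 g \<le> N \<Longrightarrow> e \<in> E \<Longrightarrow> monomial3 a b c g * e \<in> graded_span a b c E N"
  unfolding graded_span_def by (rule Q.span_base) blast

lemma graded_span_generator: "e \<in> E \<Longrightarrow> e \<in> graded_span a b c E N"
  using graded_span_base[of 0 N e E a b c] by simp

lemma graded_span_mono: "N \<le> N' \<Longrightarrow> graded_span a b c E N \<subseteq> graded_span a b c E N'"
  unfolding graded_span_def by (rule Q.span_mono) (blast intro: le_trans)

lemma graded_span_add:
  "x \<in> graded_span a b c E N \<Longrightarrow> y \<in> graded_span a b c E N \<Longrightarrow> x + y \<in> graded_span a b c E N"
  unfolding graded_span_def by (rule Q.span_add)

lemma graded_span_diff:
  "x \<in> graded_span a b c E N \<Longrightarrow> y \<in> graded_span a b c E N \<Longrightarrow> x - y \<in> graded_span a b c E N"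
  unfolding graded_span_def by (rule Q.span_diff)

lemma graded_span_of_int_mult:
  "x \<in> graded_span a b c E N \<Longrightarrow> of_int q * x \<in> graded_span a b c E N"
  unfolding graded_span_def using Q.span_scale[of x _ "of_int q"] by simp

lemma graded_span_mult_monomial3:
  assumes "x \<in> graded_span a b c E N"
  shows "monomial3 a b c h * x \<in> graded_span a b c E (N + degree3 h)"
  using assms unfolding graded_span_def
proof (rule span_mult_closed[rotated])
  fix s assume "s \<in> {monomial3 a b c g * e | g e. degree3 g \<le> N \<and> e \<in> E}"
  then obtain g e where s: "s = monomial3 a b c g * e" "degree3 g \<le> N" "e \<in> E"
    by blast
  have "monomial3 a b c h * s = monomial3 a b c (h + g) * e"
    by (simp add: s monomial3_add)
  moreover have "degree3 (h + g) \<le> N + degree3 h"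
    using s(2) by (simp add: degree3_add)
  ultimately show "monomial3 a b c h * s \<in> Q.span {monomial3 a b c g * e |g e. degree3 g \<le> N + degree3 h \<and> e \<in> E}"
    using s(3) by (intro Q.span_base) blast
qed

lemma graded_span_mult:
  assumes z: "\<forall>e\<in>E. z * e \<in> graded_span a b c E k" and x: "x \<in> graded_span a b c E N"
  shows "z * x \<in> graded_span a b c E (N + k)"
  using x unfolding graded_span_def
proof (rule span_mult_closed[rotated])
  fix s assume "s \<in> {monomial3 a b c g * e | g e. degree3 g \<le> N \<and> e \<in> E}"
  then obtain g e where s: "s = monomial3 a b c g * e" "degree3 g \<le> N" "e \<in> E"
    by blast
  have "monomial3 a b c g * (z * e) \<in> graded_span a b c E (k + degree3 g)"
    using graded_span_mult_monomial3 z s(3) by blast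
  also have "\<dots> \<subseteq> graded_span a b c E (N + k)"
    using s(2) by (intro graded_span_mono) simp
  finally show "z * s \<in> Q.span {monomial3 a b c g * e |g e. degree3 g \<le> N + k \<and> e \<in> E}"
    by (simp add: s graded_span_def algebra_simps)
qed

lemma graded_span_mult_power:
  assumes z: "\<forall>e\<in>E. z * e \<in> graded_span a b c E k" and x: "x \<in> graded_span a b c E N"
  shows "z ^ n * x \<in> graded_span a b c E (N + n * k)"
proof (induction n)
  case 0
  then show ?case using x by simp
next
  case (Suc n)
  have "z * (z ^ n * x) \<in> graded_span a b c E (N + n * k + k)"
    by (rule graded_span_mult[OF z Suc])
  then show ?case
    by (simp add: algebra_simps)
qed

lemma graded_span_monomial3:
  assumes "1 \<in> E"
    and "\<forall>e\<in>E. x1 * e \<in> graded_span a b c E k"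
    and "\<forall>e\<in>E. x2 * e \<in> graded_span a b c E k"
    and "\<forall>e\<in>E. x3 * e \<in> graded_span a b c E k"
  shows "monomial3 x1 x2 x3 g \<in> graded_span a b c E (k * degree3 g)"
proof -
  obtain i j l where g: "g = (i, j, l)"
    by (cases g)
  have "x1 ^ i * (x2 ^ j * (x3 ^ l * 1)) \<in> graded_span a b c E (0 + l * k + j * k + i * k)"
    using assms by (intro graded_span_mult_power graded_span_generator)
  then show ?thesis
    by (simp add: g monomial3_def degree3_def algebra_simps)
qed

definition glex :: "((nat \<times> nat \<times> nat) \<times> (nat \<times> nat \<times> nat)) set" where
  "glex = inv_image (less_than <*lex*> less_than <*lex*> less_than) (\<lambda>g. (degree3 g, fst g, fst (snd g)))"

lemma wf_glex: "wf glex"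
  unfolding glex_def by (intro wf_inv_image wf_lex_prod wf_less_than)

lemma glex_iff:
  "(g, h) \<in> glex \<longleftrightarrow> degree3 g < degree3 h \<or>
     degree3 g = degree3 h \<and> (fst g < fst h \<or> fst g = fst h \<and> fst (snd g) < fst (snd h))"
  unfolding glex_def by auto

lemma glex_trans: "(g, h) \<in> glex \<Longrightarrow> (h, l) \<in> glex \<Longrightarrow> (g, l) \<in> glex"
  unfolding glex_iff by auto

lemma glex_total: "g \<noteq> h \<Longrightarrow> (g, h) \<in> glex \<or> (h, g) \<in> glex"
  by (cases g; cases h) (auto simp: glex_iff degree3_def)

lemma glex_add: "(g, h) \<in> glex \<Longrightarrow> (d + g, d + h) \<in> glex"
  unfolding glex_iff by (auto simp: degree3_def)

lemma glex_degree3: "(g, h) \<in> glex \<Longrightarrow> degree3 g \<le> degree3 h"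
  unfolding glex_iff by auto

lemma finite_glex_greatest:
  assumes "finite S" "S \<noteq> {}"
  shows "\<exists>\<mu>\<in>S. \<forall>\<nu>\<in>S. \<nu> \<noteq> \<mu> \<longrightarrow> (\<nu>, \<mu>) \<in> glex"
  using assms
proof (induction S rule: finite_ne_induct)
  case (singleton x)
  then show ?case by auto
next
  case (insert x S)
  then obtain \<mu> where \<mu>: "\<mu> \<in> S" "\<forall>\<nu>\<in>S. \<nu> \<noteq> \<mu> \<longrightarrow> (\<nu>, \<mu>) \<in> glex"
    by blast
  show ?case
  proof (cases "(x, \<mu>) \<in> glex")
    case True
    then show ?thesis using \<mu> by auto
  next
    case False
    then have "(\<mu>, x) \<in> glex"
      using glex_total[of x \<mu>] insert.hyps \<mu>(1) by auto
    have "(\<nu>, x) \<in> glex" if "\<nu> \<in> S" for \<nu>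
      using \<mu> \<open>(\<mu>, x) \<in> glex\<close> that glex_trans by (cases "\<nu> = \<mu>") blast+
    then show ?thesis
      by blast
  qed
qed

definition standard_monomials :: "nat \<Rightarrow> nat \<times> nat \<times> nat \<Rightarrow> (nat \<times> nat \<times> nat) set" where
  "standard_monomials N \<mu> =
     {g. degree3 g \<le> N \<and> \<not> (fst \<mu> \<le> fst g \<and> fst (snd \<mu>) \<le> fst (snd g) \<and> snd (snd \<mu>) \<le> snd (snd g))}"

lemma finite_standard_monomials: "finite (standard_monomials N \<mu>)"
  by (rule finite_subset[of _ "{..N} \<times> {..N} \<times> {..N}"]) (auto simp: standard_monomials_def degree3_def)

lemma card_standard_monomials: "card (standard_monomials N \<mu>) \<le> degree3 \<mu> * (N + 1)^2"
proof -
  define A1 where "A1 = {..<fst \<mu>} \<times> {..N} \<times> {..N}"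
  define A2 where "A2 = {..N} \<times> {..<fst (snd \<mu>)} \<times> {..N}"
  define A3 where "A3 = {..N} \<times> {..N} \<times> {..<snd (snd \<mu>)}"
  have "standard_monomials N \<mu> \<subseteq> A1 \<union> A2 \<union> A3"
    by (auto simp: standard_monomials_def A1_def A2_def A3_def degree3_def)
  then have "card (standard_monomials N \<mu>) \<le> card (A1 \<union> A2 \<union> A3)"
    by (rule card_mono[rotated]) (simp add: A1_def A2_def A3_def)
  also have "\<dots> \<le> card A1 + card A2 + card A3"
    using card_Un_le[of "A1 \<union> A2" A3] card_Un_le[of A1 A2] by linarith
  also have "\<dots> = degree3 \<mu> * (N + 1)^2"
    by (simp add: A1_def A2_def A3_def card_cartesian_product degree3_def power2_eq_square algebra_simps)
  finally show ?thesis .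
qed

text \<open>Division by a relation with leading monomial \<open>\<mu>\<close>: the leading term of the relation rewrites
  \<open>y\<^sup>\<mu>\<close> into a combination of glex-smaller monomials, so by well-founded induction every monomial
  of degree \<open>\<le> N\<close> reduces to standard ones.\<close>
lemma monomial3_in_span_standard_monomials:
  fixes r :: "nat \<times> nat \<times> nat \<Rightarrow> int"
  assumes fin: "finite {m. r m \<noteq> 0}" and r\<mu>: "r \<mu> \<noteq> 0"
    and lead: "\<And>\<nu>. r \<nu> \<noteq> 0 \<Longrightarrow> \<nu> \<noteq> \<mu> \<Longrightarrow> (\<nu>, \<mu>) \<in> glex"
    and rel: "(\<Sum>m | r m \<noteq> 0. of_int (r m) * monomial3 a b c m) = 0"
  shows "degree3 \<gamma> \<le> N \<Longrightarrow> monomial3 a b c \<gamma> \<in> Q.span (monomial3 a b c ` standard_monomials N \<mu>)"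
proof (induction \<gamma> rule: wf_induct[OF wf_glex])
  case (1 \<gamma>)
  let ?y = "monomial3 a b c" and ?V = "Q.span (monomial3 a b c ` standard_monomials N \<mu>)"
  show ?case
  proof (cases "\<gamma> \<in> standard_monomials N \<mu>")
    case True
    then show ?thesis by (intro Q.span_base) auto
  next
    case False
    define \<delta> where "\<delta> = (fst \<gamma> - fst \<mu>, fst (snd \<gamma>) - fst (snd \<mu>), snd (snd \<gamma>) - snd (snd \<mu>))"
    have \<gamma>: "\<gamma> = \<delta> + \<mu>"
      using False 1(2) by (auto simp: standard_monomials_def \<delta>_def prod_eq_iff)
    define S where "S = {m. r m \<noteq> 0} - {\<mu>}"
    have lead_term: "of_int (r \<mu>) * ?y \<mu> = - (\<Sum>m\<in>S. of_int (r m) * ?y m)"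
      using rel fin r\<mu> by (simp add: S_def sum.remove eq_neg_iff_add_eq_0)
    have "of_int (r \<mu>) * ?y \<gamma> = ?y \<delta> * (of_int (r \<mu>) * ?y \<mu>)"
      by (simp add: \<gamma> monomial3_add)
    also have "\<dots> = - (\<Sum>m\<in>S. of_int (r m) * ?y (\<delta> + m))"
      unfolding lead_term by (simp add: sum_distrib_left monomial3_add mult_ac)
    finally have "of_int (r \<mu>) * ?y \<gamma> = - (\<Sum>m\<in>S. of_int (r m) * ?y (\<delta> + m))" .
    moreover have "?y (\<delta> + m) \<in> ?V" if "m \<in> S" for m
    proof -
      have lt: "(\<delta> + m, \<gamma>) \<in> glex"
        unfolding \<gamma> using that lead by (intro glex_add) (auto simp: S_def)
      then show ?thesis
        using 1 glex_degree3[OF lt] by (meson le_trans)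
    qed
    ultimately have "of_rat (1 / of_int (r \<mu>)) * (of_int (r \<mu>) * ?y \<gamma>) \<in> ?V"
      using Q.span_scale[of _ _ "of_int (r _)"]
      by (auto intro!: Q.span_scale Q.span_neg Q.span_sum)
    then show ?thesis
      using r\<mu> by (simp add: of_rat_divide)
  qed
qed

lemma graded_span_in_small_span:
  fixes r :: "nat \<times> nat \<times> nat \<Rightarrow> int"
  assumes fin: "finite {m. r m \<noteq> 0}" and r\<mu>: "r \<mu> \<noteq> 0"
    and lead: "\<And>\<nu>. r \<nu> \<noteq> 0 \<Longrightarrow> \<nu> \<noteq> \<mu> \<Longrightarrow> (\<nu>, \<mu>) \<in> glex"
    and rel: "(\<Sum>m | r m \<noteq> 0. of_int (r m) * monomial3 a b c m) = 0"
    and E: "finite E"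
  obtains T where "finite T" "card T \<le> degree3 \<mu> * card E * (N + 1)^2"
    "graded_span a b c E N \<subseteq> Q.span T"
proof
  let ?B = "monomial3 a b c ` standard_monomials N \<mu>"
  define T where "T = (\<lambda>(s, e). s * e) ` (?B \<times> E)"
  show "finite T"
    unfolding T_def using finite_standard_monomials E by simp
  have "card T \<le> card ?B * card E"
    unfolding T_def by (metis card_cartesian_product card_image_le finite_SigmaI
        finite_imageI finite_standard_monomials E)
  also have "\<dots> \<le> card (standard_monomials N \<mu>) * card E"
    by (simp add: card_image_le finite_standard_monomials)
  also have "\<dots> \<le> degree3 \<mu> * (N + 1)^2 * card E"
    using card_standard_monomials by simp
  finally show "card T \<le> degree3 \<mu> * card E * (N + 1)^2"
    by (simp add: algebra_simps)
  show "graded_span a b c E N \<subseteq> Q.span T"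
    unfolding graded_span_def
  proof (intro Q.span_minimal Q.subspace_span subsetI)
    fix t assume "t \<in> {monomial3 a b c g * e | g e. degree3 g \<le> N \<and> e \<in> E}"
    then obtain g e where t: "t = monomial3 a b c g * e" "degree3 g \<le> N" "e \<in> E"
      by blast
    have "e * s \<in> Q.span T" if "s \<in> ?B" for s
      unfolding T_def using that t(3)
      by (intro Q.span_base image_eqI[of _ _ "(s, e)"]) (auto simp: mult.commute)
    moreover have "monomial3 a b c g \<in> Q.span ?B"
      by (rule monomial3_in_span_standard_monomials[OF fin r\<mu> lead rel t(2)])
    ultimately have "e * monomial3 a b c g \<in> Q.span T"
      by (rule span_mult_closed)
    then show "t \<in> Q.span T"
      by (simp add: t(1) mult.commute)
  qed
qed

text \<open>Counting dimensions: the \<open>(D+1)\<^sup>3\<close> monomials \<open>x\<^sup>\<beta>\<close> with \<open>\<beta> \<le> D\<close> lie in a \<open>\<bbbQ>\<close>-space of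
  dimension \<open>O(D\<^sup>2)\<close>, because modulo the relation the \<open>y\<close>-monomials of degree \<open>\<le> N\<close> span a space of
  dimension \<open>O(N\<^sup>2)\<close>.\<close>
lemma not_alg_indep3_if_finite_over:
  assumes dep: "\<not> alg_indep3 y1 y2 y3" and E: "finite E" "1 \<in> E"
    and x1: "\<forall>e\<in>E. x1 * e \<in> graded_span y1 y2 y3 E k"
    and x2: "\<forall>e\<in>E. x2 * e \<in> graded_span y1 y2 y3 E k"
    and x3: "\<forall>e\<in>E. x3 * e \<in> graded_span y1 y2 y3 E k"
  shows "\<not> alg_indep3 x1 x2 x3"
proof
  assume indep: "alg_indep3 x1 x2 x3"
  obtain r where r: "finite {m. r m \<noteq> 0}" "\<exists>m. r m \<noteq> 0"
    "(\<Sum>m | r m \<noteq> 0. of_int (r m) * monomial3 y1 y2 y3 m) = 0"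
    using dep unfolding alg_indep3_iff by blast
  obtain \<mu> where \<mu>: "r \<mu> \<noteq> 0" "\<And>\<nu>. r \<nu> \<noteq> 0 \<Longrightarrow> \<nu> \<noteq> \<mu> \<Longrightarrow> (\<nu>, \<mu>) \<in> glex"
    using finite_glex_greatest[OF r(1)] r(2) by blast
  define K where "K = degree3 \<mu> * card E"
  define D where "D = K * (3 * k + 1)^2"
  define N where "N = k * (3 * D)"
  obtain T where T: "finite T" "card T \<le> K * (N + 1)^2" "graded_span y1 y2 y3 E N \<subseteq> Q.span T"
    using graded_span_in_small_span[OF r(1) \<mu> r(3) E(1), of N] unfolding K_def by blast
  define Box where "Box = {..D} \<times> {..D} \<times> {..D}"
  have "monomial3 x1 x2 x3 ` Box \<subseteq> graded_span y1 y2 y3 E N"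
  proof
    fix x assume "x \<in> monomial3 x1 x2 x3 ` Box"
    then obtain \<beta> where \<beta>: "\<beta> \<in> Box" "x = monomial3 x1 x2 x3 \<beta>"
      by blast
    have "x \<in> graded_span y1 y2 y3 E (k * degree3 \<beta>)"
      unfolding \<beta>(2) by (rule graded_span_monomial3[OF E(2) x1 x2 x3])
    also have "\<dots> \<subseteq> graded_span y1 y2 y3 E N"
      using \<beta>(1) by (intro graded_span_mono) (auto simp: Box_def degree3_def N_def)
    finally show "x \<in> graded_span y1 y2 y3 E N" .
  qed
  then have "card (monomial3 x1 x2 x3 ` Box) \<le> card T"
    using Q.independent_span_bound[OF T(1) alg_indep3_independent_monomials[OF indep]] T(3)
    by (simp add: Box_def)
  moreover have "card (monomial3 x1 x2 x3 ` Box) = (D + 1)^3"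
    using alg_indep3_inj_monomial3[OF indep]
    by (simp add: card_image inj_on_subset Box_def card_cartesian_product power3_eq_cube)
  moreover have "K * (N + 1)^2 \<le> K * ((3 * k + 1) * (D + 1))^2"
    by (intro mult_left_mono power_mono) (auto simp: N_def algebra_simps)
  moreover have "K * ((3 * k + 1) * (D + 1))^2 = D * (D + 1)^2"
    by (simp only: power_mult_distrib mult.assoc[symmetric] D_def[symmetric])
  moreover have "D * (D + 1)^2 < (D + 1)^3"
    by (simp add: power3_eq_cube power2_eq_square)
  ultimately show False
    using T(2) by linarith
qed

section \<open>Generic scaling factors\<close>

lemma countable_finite_support:
  "countable {p :: 'a::countable \<Rightarrow> 'b::{countable, zero}. finite {m. p m \<noteq> 0}}"
proof (rule countable_image_inj_on)
  let ?graph = "\<lambda>p :: 'a \<Rightarrow> 'b. (\<lambda>m. (m, p m)) ` {m. p m \<noteq> 0}"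
  show "countable (?graph ` {p. finite {m. p m \<noteq> 0}})"
    by (rule countable_subset[OF _ countable_Collect_finite]) auto
  show "inj_on ?graph {p. finite {m. p m \<noteq> 0}}"
  proof (rule inj_onI, rule ext)
    fix p q m assume eq: "?graph p = ?graph q"
    show "p m = q m"
      using eq[THEN equalityD1, THEN subsetD, of "(m, p m)"]
        eq[THEN equalityD2, THEN subsetD, of "(m, q m)"]
      by (cases "p m = 0"; cases "q m = 0") auto
  qed
qed

text \<open>For a nonzero relation \<open>p\<close>, \<open>k \<mapsto> p(k a\<^sub>1, k a\<^sub>2, k a\<^sub>3)\<close> is a polynomial in \<open>k\<close>, which is nonzero
  because it does not vanish at \<open>k\<^sub>0\<close>; so the bad \<open>k\<close> form a countable union of finite sets.\<close>
lemma AE_alg_indep3_scaled: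
  assumes "alg_indep3 (k0 * a1) (k0 * a2) (k0 * a3)"
  shows "AE k in lborel. alg_indep3 (k * a1) (k * a2) (k * a3)"
proof -
  define NZ where "NZ = {p :: nat \<times> nat \<times> nat \<Rightarrow> int. finite {m. p m \<noteq> 0} \<and> (\<exists>m. p m \<noteq> 0)}"
  define P :: "(nat \<times> nat \<times> nat \<Rightarrow> int) \<Rightarrow> real poly"
    where "P p = (\<Sum>m | p m \<noteq> 0. monom (of_int (p m) * monomial3 a1 a2 a3 m) (degree3 m))" for p
  have poly_P: "poly (P p) k = (\<Sum>m | p m \<noteq> 0. of_int (p m) * monomial3 (k * a1) (k * a2) (k * a3) m)"
    for p k
    unfolding P_def poly_sum poly_monom by (rule sum.cong) (simp_all add: monomial3_scale)
  have P_nonzero: "P p \<noteq> 0" if "p \<in> NZ" for p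
    using assms that poly_P[of p k0] unfolding alg_indep3_iff NZ_def by force
  have "countable NZ"
    unfolding NZ_def by (rule countable_subset[OF _ countable_finite_support]) auto
  then have "countable (\<Union>p\<in>NZ. {k. poly (P p) k = 0})"
    by (intro countable_UN) (auto intro!: countable_finite poly_roots_finite P_nonzero)
  then have null: "(\<Union>p\<in>NZ. {k. poly (P p) k = 0}) \<in> null_sets lborel"
    by (rule countable_imp_null_set_lborel)
  show ?thesis
  proof (rule AE_I'[OF null], rule subsetI)
    fix k assume "k \<in> {k \<in> space lborel. \<not> alg_indep3 (k * a1) (k * a2) (k * a3)}"
    then obtain p where "p \<in> NZ" "poly (P p) k = 0"
      unfolding alg_indep3_iff NZ_def poly_P by blast
    then show "k \<in> (\<Union>p\<in>NZ. {k. poly (P p) k = 0})"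
      by blast
  qed
qed

lemma AE_lborel_obtain_pos:
  assumes "AE k in lborel. P k"
  obtains k :: real where "k > 0" "P k"
proof -
  from assms obtain N where N: "{k \<in> space lborel. \<not> P k} \<subseteq> N" "emeasure lborel N = 0" "N \<in> sets lborel"
    by (rule AE_E)
  have "{0<..<1::real} \<subseteq> N" if "\<forall>k>0. \<not> P k"
    using N(1) that by auto
  moreover have "\<not> emeasure lborel {0<..<1::real} \<le> emeasure lborel N"
    using N(2) by simp
  ultimately show ?thesis
    using that emeasure_mono[OF _ N(3)] by blast
qed

section \<open>Sines versus cosines\<close>

lemma not_alg_indep3_cosines:
  assumes dep: "\<forall>k. \<not> alg_indep3 (k * s1) (k * s2) (k * s3)"
    and nz: "s1 \<noteq> 0" "s2 \<noteq> 0" "s3 \<noteq> 0"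
    and c1: "c1 = (s2^2 + s3^2 - s1^2) / (2 * s2 * s3)"
    and c2: "c2 = (s1^2 + s3^2 - s2^2) / (2 * s1 * s3)"
    and c3: "c3 = (s1^2 + s2^2 - s3^2) / (2 * s1 * s2)"
  shows "\<not> alg_indep3 (t * c1) (t * c2) (t * c3)"
proof -
  define k where "k = root 3 (t / (2 * s1 * s2 * s3))"
    \<comment> \<open>so that each \<open>t c\<^sub>i\<close> becomes a cubic form in \<open>k s\<^sub>1, k s\<^sub>2, k s\<^sub>3\<close>\<close>
  have k3: "k^3 * (2 * s1 * s2 * s3) = t"
    using nz by (simp add: k_def odd_real_root_pow)
  define y1 where "y1 = k * s1"
  define y2 where "y2 = k * s2"
  define y3 where "y3 = k * s3"
  let ?y = "monomial3 y1 y2 y3" and ?M = "graded_span y1 y2 y3 {1} 3"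
  have "?y g \<in> ?M" if "degree3 g \<le> 3" for g
    using graded_span_base[OF that, of 1 "{1}" y1 y2 y3] by simp
  then have cubic: "?y g + ?y h - ?y l \<in> ?M"
    if "degree3 g = 3" "degree3 h = 3" "degree3 l = 3" for g h l
    using that by (simp add: graded_span_add graded_span_diff)
  have "t * c1 = ?y (1, 2, 0) + ?y (1, 0, 2) - ?y (3, 0, 0)"
    using nz unfolding c1 k3[symmetric]
    by (simp add: monomial3_def y1_def y2_def y3_def field_simps power2_eq_square power3_eq_cube)
  moreover have "t * c2 = ?y (2, 1, 0) + ?y (0, 1, 2) - ?y (0, 3, 0)"
    using nz unfolding c2 k3[symmetric]
    by (simp add: monomial3_def y1_def y2_def y3_def field_simps power2_eq_square power3_eq_cube)
  moreover have "t * c3 = ?y (2, 0, 1) + ?y (0, 2, 1) - ?y (0, 0, 3)"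
    using nz unfolding c3 k3[symmetric]
    by (simp add: monomial3_def y1_def y2_def y3_def field_simps power2_eq_square power3_eq_cube)
  ultimately have "\<forall>e\<in>{1}. t * c1 * e \<in> ?M" "\<forall>e\<in>{1}. t * c2 * e \<in> ?M" "\<forall>e\<in>{1}. t * c3 * e \<in> ?M"
    using cubic by (simp_all add: degree3_def)
  moreover have "\<not> alg_indep3 y1 y2 y3"
    using dep by (simp add: y1_def y2_def y3_def)
  ultimately show ?thesis
    using not_alg_indep3_if_finite_over[of y1 y2 y3 "{1}"] by simp
qed

lemma graded_span_mult_sqrt:
  assumes t: "\<forall>e\<in>E. t * e \<in> graded_span y1 y2 y3 E k"
    and x: "x^2 = t^2 - monomial3 y1 y2 y3 g" "degree3 g \<le> 2 * k"
    and E: "\<forall>e\<in>E. x * e \<in> E \<or> (\<exists>e'\<in>E. e = x * e')"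
  shows "\<forall>e\<in>E. x * e \<in> graded_span y1 y2 y3 E (2 * k)"
proof
  fix e assume "e \<in> E"
  with E consider "x * e \<in> E" | e' where "e' \<in> E" "e = x * e'"
    by blast
  then show "x * e \<in> graded_span y1 y2 y3 E (2 * k)"
  proof cases
    case 1
    then show ?thesis by (rule graded_span_generator)
  next
    case 2
    have "t^2 * e' \<in> graded_span y1 y2 y3 E (0 + 2 * k)"
      using graded_span_mult_power[OF t graded_span_generator[OF 2(1)]] .
    moreover have "monomial3 y1 y2 y3 g * e' \<in> graded_span y1 y2 y3 E (2 * k)"
      using x(2) 2(1) by (rule graded_span_base)
    moreover have "x * e = t^2 * e' - monomial3 y1 y2 y3 g * e'"
      by (simp add: 2(2) power2_eq_square[symmetric] x(1) algebra_simps)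
    ultimately show ?thesis
      by (simp add: graded_span_diff)
  qed
qed

text \<open>If \<open>t\<close> is cubic over \<open>\<bbbQ>[y\<^sub>1,y\<^sub>2,y\<^sub>3]\<close> and \<open>x\<^sub>i\<^sup>2 \<in> \<bbbQ>[y\<^sub>1,y\<^sub>2,y\<^sub>3,t]\<close>, these products span
  \<open>\<bbbQ>[y\<^sub>1,y\<^sub>2,y\<^sub>3,t,x\<^sub>1,x\<^sub>2,x\<^sub>3]\<close> as a \<open>\<bbbQ>[y\<^sub>1,y\<^sub>2,y\<^sub>3]\<close>-module.\<close>
definition sqrt_basis :: "real \<Rightarrow> real \<Rightarrow> real \<Rightarrow> real \<Rightarrow> real set" where
  "sqrt_basis t x1 x2 x3 =
     (\<lambda>(j, a, b, c). t^j * x1^a * x2^b * x3^c) ` ({..<3} \<times> {..<2} \<times> {..<2} \<times> {..<2})"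

lemma finite_sqrt_basis: "finite (sqrt_basis t x1 x2 x3)"
  by (simp add: sqrt_basis_def)


lemma sqrt_basis_swap12: "sqrt_basis t x2 x1 x3 = sqrt_basis t x1 x2 x3"
  unfolding sqrt_basis_def by (force simp: mult_ac)

lemma sqrt_basis_swap13: "sqrt_basis t x3 x2 x1 = sqrt_basis t x1 x2 x3"
  unfolding sqrt_basis_def by (force simp: mult_ac)

lemma sqrt_basis_memI:
  "j < 3 \<Longrightarrow> a < 2 \<Longrightarrow> b < 2 \<Longrightarrow> c < 2 \<Longrightarrow> t^j * x1^a * x2^b * x3^c \<in> sqrt_basis t x1 x2 x3"
  unfolding sqrt_basis_def by (rule image_eqI[of _ _ "(j, a, b, c)"]) auto

lemma sqrt_basis_memE:
  assumes "e \<in> sqrt_basis t x1 x2 x3"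
  obtains j a b c where "j < 3" "a < 2" "b < 2" "c < 2" "e = t^j * x1^a * x2^b * x3^c"
  using assms unfolding sqrt_basis_def by auto

lemma sqrt_basis_mult_first:
  assumes "e \<in> sqrt_basis t x1 x2 x3"
  shows "x1 * e \<in> sqrt_basis t x1 x2 x3 \<or> (\<exists>e'\<in>sqrt_basis t x1 x2 x3. e = x1 * e')"
proof -
  obtain j a b c where e: "j < 3" "a < 2" "b < 2" "c < 2" "e = t^j * x1^a * x2^b * x3^c"
    using assms by (rule sqrt_basis_memE)
  from less_2_cases[OF e(2)] show ?thesis
  proof
    assume "a = 0"
    then have "x1 * e = t^j * x1^1 * x2^b * x3^c"
      by (simp add: e(5) mult_ac)
    moreover have "t^j * x1^1 * x2^b * x3^c \<in> sqrt_basis t x1 x2 x3"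
      using e by (intro sqrt_basis_memI) auto
    ultimately have "x1 * e \<in> sqrt_basis t x1 x2 x3"
      by (simp only:)
    then show ?thesis ..
  next
    assume "a = Suc 0"
    then have "e = x1 * (t^j * x1^0 * x2^b * x3^c)"
      by (simp add: e(5) mult_ac)
    moreover have "t^j * x1^0 * x2^b * x3^c \<in> sqrt_basis t x1 x2 x3"
      using e by (intro sqrt_basis_memI) auto
    ultimately show ?thesis
      by blast
  qed
qed

lemma graded_span_mult_cubic_root:
  assumes t: "t^3 = (y1^2 + y2^2 + y3^2) * t + 2 * (y1 * y2 * y3)"
    and "e \<in> sqrt_basis t x1 x2 x3"
  shows "t * e \<in> graded_span y1 y2 y3 (sqrt_basis t x1 x2 x3) 3"
proof -
  let ?y = "monomial3 y1 y2 y3" and ?E = "sqrt_basis t x1 x2 x3"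
  obtain j a b c where e: "j < 3" "a < 2" "b < 2" "c < 2" "e = t^j * x1^a * x2^b * x3^c"
    using assms(2) by (rule sqrt_basis_memE)
  show ?thesis
  proof (cases "j < 2")
    case True
    have "t * e = t^(j + 1) * x1^a * x2^b * x3^c"
      by (simp add: e(5) algebra_simps)
    moreover have "t^(j + 1) * x1^a * x2^b * x3^c \<in> ?E"
      using True e by (intro sqrt_basis_memI) auto
    ultimately show ?thesis
      by (metis graded_span_generator)
  next
    case False
    with e(1) have "j = 2"
      by simp
    then have "t * e = t^3 * (x1^a * x2^b * x3^c)"
      by (simp add: e(5) power3_eq_cube power2_eq_square algebra_simps)
    also have "\<dots> = ?y (2, 0, 0) * (t^1 * x1^a * x2^b * x3^c) + ?y (0, 2, 0) * (t^1 * x1^a * x2^b * x3^c)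
        + ?y (0, 0, 2) * (t^1 * x1^a * x2^b * x3^c) + of_int 2 * (?y (1, 1, 1) * (t^0 * x1^a * x2^b * x3^c))"
      unfolding t by (simp add: monomial3_def algebra_simps)
    finally show ?thesis
      using e(2-4)
      by (simp only:) (intro graded_span_add graded_span_of_int_mult graded_span_base sqrt_basis_memI;
          simp add: degree3_def)
  qed
qed

lemma not_alg_indep3_square_roots:
  assumes dep: "\<not> alg_indep3 y1 y2 y3"
    and t: "t^3 = (y1^2 + y2^2 + y3^2) * t + 2 * (y1 * y2 * y3)"
    and x1: "x1^2 = t^2 - y1^2" and x2: "x2^2 = t^2 - y2^2" and x3: "x3^2 = t^2 - y3^2"
  shows "\<not> alg_indep3 x1 x2 x3"
proof (rule not_alg_indep3_if_finite_over[OF dep finite_sqrt_basis])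
  show "1 \<in> sqrt_basis t x1 x2 x3"
    using sqrt_basis_memI[of 0 0 0 0 t x1 x2 x3] by simp
  let ?y = "monomial3 y1 y2 y3" and ?E = "sqrt_basis t x1 x2 x3"
  have tE: "\<forall>e\<in>?E. t * e \<in> graded_span y1 y2 y3 ?E 3"
    using graded_span_mult_cubic_root[OF t] by blast
  have y_sq: "?y (2, 0, 0) = y1^2" "?y (0, 2, 0) = y2^2" "?y (0, 0, 2) = y3^2"
    by (simp_all add: monomial3_def)
  show "\<forall>e\<in>?E. x1 * e \<in> graded_span y1 y2 y3 ?E (2 * 3)"
    using sqrt_basis_mult_first[of _ t x1 x2 x3]
    by (intro graded_span_mult_sqrt[OF tE x1[folded y_sq(1)]]) (auto simp: degree3_def)
  show "\<forall>e\<in>?E. x2 * e \<in> graded_span y1 y2 y3 ?E (2 * 3)"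
    using sqrt_basis_mult_first[of _ t x2 x1 x3]
    by (intro graded_span_mult_sqrt[OF tE x2[folded y_sq(2)]]) (auto simp: degree3_def sqrt_basis_swap12)
  show "\<forall>e\<in>?E. x3 * e \<in> graded_span y1 y2 y3 ?E (2 * 3)"
    using sqrt_basis_mult_first[of _ t x3 x2 x1]
    by (intro graded_span_mult_sqrt[OF tE x3[folded y_sq(3)]]) (auto simp: degree3_def sqrt_basis_swap13)
qed

lemma not_alg_indep3_sines:
  assumes dep: "\<forall>k. \<not> alg_indep3 (k * c1) (k * c2) (k * c3)"
    and cos_rel: "c1^2 + c2^2 + c3^2 + 2 * c1 * c2 * c3 = 1"
    and s1: "s1^2 = 1 - c1^2" and s2: "s2^2 = 1 - c2^2" and s3: "s3^2 = 1 - c3^2"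
  shows "\<not> alg_indep3 (t * s1) (t * s2) (t * s3)"
proof (rule not_alg_indep3_square_roots)
  show "\<not> alg_indep3 (t * c1) (t * c2) (t * c3)"
    using dep by blast
  have "t^3 = t^3 * (c1^2 + c2^2 + c3^2 + 2 * c1 * c2 * c3)"
    using cos_rel by simp
  then show "t^3 = ((t * c1)^2 + (t * c2)^2 + (t * c3)^2) * t + 2 * (t * c1 * (t * c2) * (t * c3))"
    by (simp add: power2_eq_square power3_eq_cube algebra_simps)
  show "(t * s1)^2 = t^2 - (t * c1)^2" "(t * s2)^2 = t^2 - (t * c2)^2" "(t * s3)^2 = t^2 - (t * c3)^2"
    by (simp_all add: s1 s2 s3 algebra_simps)
qed

lemma ex_alg_indep3_sines_iff_cosines:
  assumes nz: "s1 \<noteq> 0" "s2 \<noteq> 0" "s3 \<noteq> 0"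
    and s: "s1^2 = 1 - c1^2" "s2^2 = 1 - c2^2" "s3^2 = 1 - c3^2"
    and c: "c1 = (s2^2 + s3^2 - s1^2) / (2 * s2 * s3)"
      "c2 = (s1^2 + s3^2 - s2^2) / (2 * s1 * s3)"
      "c3 = (s1^2 + s2^2 - s3^2) / (2 * s1 * s2)"
    and cos_rel: "c1^2 + c2^2 + c3^2 + 2 * c1 * c2 * c3 = 1"
  shows "(\<exists>k. alg_indep3 (k * s1) (k * s2) (k * s3)) \<longleftrightarrow> (\<exists>k. alg_indep3 (k * c1) (k * c2) (k * c3))"
proof (rule iffI; rule ccontr)
  assume "\<nexists>k. alg_indep3 (k * c1) (k * c2) (k * c3)"
  then have "\<not> alg_indep3 (k * s1) (k * s2) (k * s3)" for k
    using not_alg_indep3_sines[OF _ cos_rel s] by blast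
  then show "\<exists>k. alg_indep3 (k * s1) (k * s2) (k * s3) \<Longrightarrow> False"
    by blast
next
  assume "\<nexists>k. alg_indep3 (k * s1) (k * s2) (k * s3)"
  then have "\<not> alg_indep3 (k * c1) (k * c2) (k * c3)" for k
    using not_alg_indep3_cosines[OF _ nz c] by blast
  then show "\<exists>k. alg_indep3 (k * c1) (k * c2) (k * c3) \<Longrightarrow> False"
    by blast
qed

lemma ex_pos_alg_indep3_iff_rescaled:
  assumes "\<rho> > 0"
  shows "(\<exists>k>0. alg_indep3 (k * l1) (k * l2) (k * l3)) \<longleftrightarrow>
    (\<exists>k. alg_indep3 (k * (\<rho> * l1)) (k * (\<rho> * l2)) (k * (\<rho> * l3)))"
proof
  assume "\<exists>k>0. alg_indep3 (k * l1) (k * l2) (k * l3)"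
  then obtain k where "alg_indep3 (k * l1) (k * l2) (k * l3)"
    by blast
  then have "alg_indep3 (k / \<rho> * (\<rho> * l1)) (k / \<rho> * (\<rho> * l2)) (k / \<rho> * (\<rho> * l3))"
    using assms by simp
  then show "\<exists>k. alg_indep3 (k * (\<rho> * l1)) (k * (\<rho> * l2)) (k * (\<rho> * l3))" ..
next
  assume "\<exists>k. alg_indep3 (k * (\<rho> * l1)) (k * (\<rho> * l2)) (k * (\<rho> * l3))"
  then have "AE k in lborel. alg_indep3 (k * (\<rho> * l1)) (k * (\<rho> * l2)) (k * (\<rho> * l3))"
    using AE_alg_indep3_scaled by blast
  then obtain k where "k > 0" "alg_indep3 (k * (\<rho> * l1)) (k * (\<rho> * l2)) (k * (\<rho> * l3))"
    by (rule AE_lborel_obtain_pos)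
  then show "\<exists>k>0. alg_indep3 (k * l1) (k * l2) (k * l3)"
    using assms by (intro exI[of _ "k * \<rho>"]) (simp add: mult.assoc)
qed

section \<open>Triangles\<close>

lemma law_of_cosines_vertex_angle:
  fixes A B C :: "real^2"
  assumes "\<not> collinear {A, B, C}"
  shows "cos (vertex_angle A B C) = ((dist A B)^2 + (dist B C)^2 - (dist A C)^2) / (2 * dist A B * dist B C)"
    and "\<bar>cos (vertex_angle A B C)\<bar> < 1"
    and "sin (vertex_angle A B C) = sqrt (1 - (cos (vertex_angle A B C))^2)"
proof -
  define u where "u = A - B"
  define v where "v = C - B"
  have "\<not> collinear {0, u, v}"
    using assms collinear_3[of A B C] by (simp add: u_def v_def NO_MATCH_def)
  then have "\<bar>u \<bullet> v\<bar> \<noteq> norm u * norm v"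
    using norm_cauchy_schwarz_equal by blast
  then have lt: "\<bar>u \<bullet> v\<bar> < norm u * norm v"
    using Cauchy_Schwarz_ineq2[of u v] by simp
  have pos: "norm u > 0" "norm v > 0"
    using assms by (auto simp: u_def v_def)
  define c where "c = (u \<bullet> v) / (norm u * norm v)"
  have c: "\<bar>c\<bar> < 1"
    using lt pos by (simp add: c_def abs_mult divide_less_eq)
  have angle: "vertex_angle A B C = arccos c"
    by (simp add: vertex_angle_def c_def u_def v_def)
  have cos: "cos (vertex_angle A B C) = c"
    using c by (simp add: angle cos_arccos_abs)
  have "(dist A C)^2 = (norm u)^2 + (norm v)^2 - 2 * (u \<bullet> v)"
    by (simp add: u_def v_def dist_norm power2_norm_eq_inner inner_diff_left inner_diff_right
        inner_commute)
  moreover have "norm u = dist A B" "norm v = dist B C"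
    by (simp_all add: u_def v_def dist_norm norm_minus_commute)
  ultimately show "cos (vertex_angle A B C) = ((dist A B)^2 + (dist B C)^2 - (dist A C)^2) / (2 * dist A B * dist B C)"
    by (simp add: cos c_def)
  show "\<bar>cos (vertex_angle A B C)\<bar> < 1"
    using c cos by simp
  show "sin (vertex_angle A B C) = sqrt (1 - (cos (vertex_angle A B C))^2)"
    using c by (simp add: angle cos sin_arccos)
qed

lemma cosines_of_triangle_identity:
  fixes l1 l2 l3 :: real
  assumes pos: "l1 > 0" "l2 > 0" "l3 > 0"
    and c1: "c1 = (l2^2 + l3^2 - l1^2) / (2 * l2 * l3)"
    and c2: "c2 = (l1^2 + l3^2 - l2^2) / (2 * l1 * l3)"
    and c3: "c3 = (l1^2 + l2^2 - l3^2) / (2 * l1 * l2)"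
  shows "c1^2 + c2^2 + c3^2 + 2 * c1 * c2 * c3 = 1"
  using pos unfolding c1 c2 c3 by (simp add: field_simps power2_eq_square)

text \<open>The law of sines: \<open>1 - c\<^sub>i\<^sup>2 = \<Delta> / (2 l\<^sub>j l\<^sub>k)\<^sup>2\<close>, where \<open>\<Delta> = 16 \<cdot> area\<^sup>2\<close> is symmetric in the
  sides, so \<open>\<surd>(1 - c\<^sub>i\<^sup>2) = \<surd>\<Delta> / (2 l\<^sub>1 l\<^sub>2 l\<^sub>3) \<cdot> l\<^sub>i\<close>.\<close>
lemma sines_of_triangle_proportional:
  fixes l1 l2 l3 :: real
  assumes pos: "l1 > 0" "l2 > 0" "l3 > 0"
    and c1: "c1 = (l2^2 + l3^2 - l1^2) / (2 * l2 * l3)"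
    and c2: "c2 = (l1^2 + l3^2 - l2^2) / (2 * l1 * l3)"
    and c3: "c3 = (l1^2 + l2^2 - l3^2) / (2 * l1 * l2)"
    and lt: "c1^2 < 1"
  obtains \<rho> where "\<rho> > 0" "sqrt (1 - c1^2) = \<rho> * l1" "sqrt (1 - c2^2) = \<rho> * l2"
    "sqrt (1 - c3^2) = \<rho> * l3"
proof
  define \<Delta> where "\<Delta> = 2*l1^2*l2^2 + 2*l2^2*l3^2 + 2*l3^2*l1^2 - l1^4 - l2^4 - l3^4"
  have d1: "1 - c1^2 = \<Delta> / (2*l2*l3)^2"
    using pos unfolding c1 \<Delta>_def
    by (simp add: field_simps power2_eq_square) (simp add: algebra_simps power2_eq_square power4_eq_xxxx)
  have d2: "1 - c2^2 = \<Delta> / (2*l1*l3)^2"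
    using pos unfolding c2 \<Delta>_def
    by (simp add: field_simps power2_eq_square) (simp add: algebra_simps power2_eq_square power4_eq_xxxx)
  have d3: "1 - c3^2 = \<Delta> / (2*l1*l2)^2"
    using pos unfolding c3 \<Delta>_def
    by (simp add: field_simps power2_eq_square) (simp add: algebra_simps power2_eq_square power4_eq_xxxx)
  have "\<Delta> / (2*l2*l3)^2 > 0"
    using lt d1 by simp
  then have "\<Delta> > 0"
    using pos by (simp add: zero_less_divide_iff)
  then show "sqrt \<Delta> / (2 * l1 * l2 * l3) > 0"
    using pos by simp
  show "sqrt (1 - c1^2) = sqrt \<Delta> / (2 * l1 * l2 * l3) * l1"
    "sqrt (1 - c2^2) = sqrt \<Delta> / (2 * l1 * l2 * l3) * l2"
    "sqrt (1 - c3^2) = sqrt \<Delta> / (2 * l1 * l2 * l3) * l3"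
    unfolding d1 d2 d3 using pos by (simp_all add: real_sqrt_divide real_sqrt_mult field_simps)
qed

lemma cosine_formula_rescale:
  fixes \<rho> a b c :: real
  assumes "\<rho> \<noteq> 0"
  shows "(b^2 + c^2 - a^2) / (2 * b * c) = ((\<rho> * b)^2 + (\<rho> * c)^2 - (\<rho> * a)^2) / (2 * (\<rho> * b) * (\<rho> * c))"
proof -
  have "((\<rho> * b)^2 + (\<rho> * c)^2 - (\<rho> * a)^2) / (2 * (\<rho> * b) * (\<rho> * c))
      = (\<rho>^2 * (b^2 + c^2 - a^2)) / (\<rho>^2 * (2 * b * c))"
    by (simp add: power2_eq_square algebra_simps)
  then show ?thesis
    using assms by simp
qed

lemma triangle_sines_cosines:
  fixes P1 P2 P3 :: "real^2"
  assumes tri: "\<not> collinear {P1, P2, P3}"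
  defines "l1 \<equiv> dist P2 P3" and "l2 \<equiv> dist P1 P3" and "l3 \<equiv> dist P1 P2"
      and "a1 \<equiv> vertex_angle P2 P1 P3" and "a2 \<equiv> vertex_angle P1 P2 P3"
      and "a3 \<equiv> vertex_angle P1 P3 P2"
  obtains \<rho> where "\<rho> > 0" "sin a1 = \<rho> * l1" "sin a2 = \<rho> * l2" "sin a3 = \<rho> * l3"
    and "sin a1 \<noteq> 0" "sin a2 \<noteq> 0" "sin a3 \<noteq> 0"
    and "cos a1 = ((sin a2)^2 + (sin a3)^2 - (sin a1)^2) / (2 * sin a2 * sin a3)"
    and "cos a2 = ((sin a1)^2 + (sin a3)^2 - (sin a2)^2) / (2 * sin a1 * sin a3)"
    and "cos a3 = ((sin a1)^2 + (sin a2)^2 - (sin a3)^2) / (2 * sin a1 * sin a2)"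
    and "(cos a1)^2 + (cos a2)^2 + (cos a3)^2 + 2 * cos a1 * cos a2 * cos a3 = 1"
proof -
  have V1: "cos a1 = (l2^2 + l3^2 - l1^2) / (2 * l2 * l3)" "\<bar>cos a1\<bar> < 1"
    "sin a1 = sqrt (1 - (cos a1)^2)"
    using law_of_cosines_vertex_angle[of P2 P1 P3] tri
    by (simp_all add: a1_def l1_def l2_def l3_def insert_commute dist_commute algebra_simps)
  have V2: "cos a2 = (l1^2 + l3^2 - l2^2) / (2 * l1 * l3)" "sin a2 = sqrt (1 - (cos a2)^2)"
    using law_of_cosines_vertex_angle[of P1 P2 P3] tri
    by (simp_all add: a2_def l1_def l2_def l3_def dist_commute add.commute)
  have V3: "cos a3 = (l1^2 + l2^2 - l3^2) / (2 * l1 * l2)" "sin a3 = sqrt (1 - (cos a3)^2)"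
    using law_of_cosines_vertex_angle[of P1 P3 P2] tri
    by (simp_all add: a3_def l1_def l2_def l3_def insert_commute dist_commute add.commute mult.commute)
  have pos: "l1 > 0" "l2 > 0" "l3 > 0"
    using tri by (auto simp: l1_def l2_def l3_def insert_commute)
  have "(cos a1)^2 < 1"
    using V1(2) by (simp add: abs_square_less_1)
  then obtain \<rho> where \<rho>: "\<rho> > 0" "sin a1 = \<rho> * l1" "sin a2 = \<rho> * l2" "sin a3 = \<rho> * l3"
    using sines_of_triangle_proportional[OF pos V1(1) V2(1) V3(1)] V1(3) V2(2) V3(2) by metis
  show ?thesis
  proof (rule that[OF \<rho>])
    show "sin a1 \<noteq> 0" "sin a2 \<noteq> 0" "sin a3 \<noteq> 0"
      using \<rho> pos by simp_all
    show "cos a1 = ((sin a2)^2 + (sin a3)^2 - (sin a1)^2) / (2 * sin a2 * sin a3)"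
      "cos a2 = ((sin a1)^2 + (sin a3)^2 - (sin a2)^2) / (2 * sin a1 * sin a3)"
      "cos a3 = ((sin a1)^2 + (sin a2)^2 - (sin a3)^2) / (2 * sin a1 * sin a2)"
      unfolding V1(1) V2(1) V3(1) \<rho>(2-4) using \<rho>(1) by (simp_all add: cosine_formula_rescale)
    show "(cos a1)^2 + (cos a2)^2 + (cos a3)^2 + 2 * cos a1 * cos a2 * cos a3 = 1"
      by (rule cosines_of_triangle_identity[OF pos V1(1) V2(1) V3(1)])
  qed
qed

theorem proposition2p2:
  fixes P1 P2 P3 :: "real^2"
  assumes tri: "\<not> collinear {P1, P2, P3}"
  defines "l1 \<equiv> dist P2 P3" and "l2 \<equiv> dist P1 P3" and "l3 \<equiv> dist P1 P2"
      and "a1 \<equiv> vertex_angle P2 P1 P3" and "a2 \<equiv> vertex_angle P1 P2 P3"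
      and "a3 \<equiv> vertex_angle P1 P3 P2"
  shows "((\<exists>k>0. alg_indep3 (k * l1) (k * l2) (k * l3)) \<longleftrightarrow>
           (\<exists>k. alg_indep3 (k * sin a1) (k * sin a2) (k * sin a3)))
       \<and> ((\<exists>k. alg_indep3 (k * sin a1) (k * sin a2) (k * sin a3)) \<longleftrightarrow>
           (\<exists>k. alg_indep3 (k * cos a1) (k * cos a2) (k * cos a3)))
       \<and> ((\<exists>k. alg_indep3 (k * sin a1) (k * sin a2) (k * sin a3)) \<longrightarrow>
           (AE k in lborel. alg_indep3 (k * sin a1) (k * sin a2) (k * sin a3)))
       \<and> ((\<exists>k. alg_indep3 (k * cos a1) (k * cos a2) (k * cos a3)) \<longrightarrow>
           (AE k in lborel. alg_indep3 (k * cos a1) (k * cos a2) (k * cos a3)))"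
proof -
  obtain \<rho> where \<rho>: "\<rho> > 0" "sin a1 = \<rho> * l1" "sin a2 = \<rho> * l2" "sin a3 = \<rho> * l3"
    and sin_nz: "sin a1 \<noteq> 0" "sin a2 \<noteq> 0" "sin a3 \<noteq> 0"
    and cos: "cos a1 = ((sin a2)^2 + (sin a3)^2 - (sin a1)^2) / (2 * sin a2 * sin a3)"
      "cos a2 = ((sin a1)^2 + (sin a3)^2 - (sin a2)^2) / (2 * sin a1 * sin a3)"
      "cos a3 = ((sin a1)^2 + (sin a2)^2 - (sin a3)^2) / (2 * sin a1 * sin a2)"
    and cos_rel: "(cos a1)^2 + (cos a2)^2 + (cos a3)^2 + 2 * cos a1 * cos a2 * cos a3 = 1"
    using triangle_sines_cosines[OF tri] unfolding l1_def l2_def l3_def a1_def a2_def a3_def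
    by blast
  have "(\<exists>k>0. alg_indep3 (k * l1) (k * l2) (k * l3)) \<longleftrightarrow>
      (\<exists>k. alg_indep3 (k * sin a1) (k * sin a2) (k * sin a3))"
    unfolding \<rho>(2-4) by (rule ex_pos_alg_indep3_iff_rescaled[OF \<rho>(1)])
  moreover have "(\<exists>k. alg_indep3 (k * sin a1) (k * sin a2) (k * sin a3)) \<longleftrightarrow>
      (\<exists>k. alg_indep3 (k * cos a1) (k * cos a2) (k * cos a3))"
    using sin_squared_eq by (intro ex_alg_indep3_sines_iff_cosines[OF sin_nz _ _ _ cos cos_rel]) auto
  ultimately show ?thesis
    using AE_alg_indep3_scaled by blast
qed

end
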